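(* Let $G=(V,E)$ be an entropy-minimal finite simple graph. Then for every nonempty $S\subseteq V$, the bipartite graph $G[c(S),S]$ has no matching saturating $S$.
   Context: For an integer $q \ge 2$ let $[q]=\{0,\dots,q-1\}$. For $f=(f_1,\dots,f_n):[q]^n\to[q]^n$, the interaction graph $\mathrm{IG}(f)$ is the digraph on $\{1,\dots,n\}$ with an arc $(u,v)$ iff $f_v$ depends essentially on $x_u$ (there exist $a,b\in[q]^n$ differing only in coordinate $u$ with $f_v(a)\ne f_v(b)$). A simple graph is viewed as the digraph with both arcs for each edge and no loops. The $q$-guessing number is $\mathrm{gn}(G,q)=\max\{\log_q|\mathrm{Fix}(f)| : \mathrm{IG}(f)\subseteq G\}$ and the entropy is $H(G)=\sup_{q\ge2}\mathrm{gn}(G,q)$. A simple graph $G$ is entropy-minimal if for every simple graph $G'$ with fewer vertices than $G$, $H(G')-\lfloor H(G')\rfloor \ne H(G)-\lfloor H(G)\rfloor$. For nonempty $S\subseteq V$, $c(S)=\{v\in V\setminus S : N(v)\subseteq S\}$, where $N(v)$ is the neighbourhood of $v$. For disjoint $S,T$, $G[S,T]$ is the bipartite graph with parts $S,T$ and the edges of $G$ between $S$ and $T$; a matching saturates $S$ if it covers every vertex of $S$. *)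

theory Defs
  imports Complex_Main
begin

definition simple_graph :: "'a set \<Rightarrow> ('a \<Rightarrow> 'a \<Rightarrow> bool) \<Rightarrow> bool" where
  "simple_graph V E \<longleftrightarrow> finite V \<and> (\<forall>u v. E u v \<longrightarrow> u \<in> V \<and> v \<in> V)
     \<and> (\<forall>u v. E u v \<longrightarrow> E v u) \<and> (\<forall>u. \<not> E u u)"

definition configs :: "'a set \<Rightarrow> nat \<Rightarrow> ('a \<Rightarrow> nat) set" where
  "configs V q = {x. (\<forall>v\<in>V. x v < q) \<and> (\<forall>v. v \<notin> V \<longrightarrow> x v = 0)}"

definition is_map :: "'a set \<Rightarrow> nat \<Rightarrow> (('a \<Rightarrow> nat) \<Rightarrow> ('a \<Rightarrow> nat)) \<Rightarrow> bool" where
  "is_map V q f \<longleftrightarrow> (\<forall>x\<in>configs V q. f x \<in> configs V q)"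

definition depends :: "'a set \<Rightarrow> nat \<Rightarrow> (('a \<Rightarrow> nat) \<Rightarrow> ('a \<Rightarrow> nat)) \<Rightarrow> 'a \<Rightarrow> 'a \<Rightarrow> bool" where
  "depends V q f u v \<longleftrightarrow> (\<exists>a\<in>configs V q. \<exists>b\<in>configs V q.
      (\<forall>w. w \<noteq> u \<longrightarrow> a w = b w) \<and> f a v \<noteq> f b v)"

text \<open>IG(f) \<subseteq> G, G viewed as digraph with both arcs per edge and no loops.\<close>
definition IG_sub :: "'a set \<Rightarrow> ('a \<Rightarrow> 'a \<Rightarrow> bool) \<Rightarrow> nat \<Rightarrow> (('a \<Rightarrow> nat) \<Rightarrow> ('a \<Rightarrow> nat)) \<Rightarrow> bool" where
  "IG_sub V E q f \<longleftrightarrow> (\<forall>u\<in>V. \<forall>v\<in>V. depends V q f u v \<longrightarrow> E u v)"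

definition Fix :: "'a set \<Rightarrow> nat \<Rightarrow> (('a \<Rightarrow> nat) \<Rightarrow> ('a \<Rightarrow> nat)) \<Rightarrow> ('a \<Rightarrow> nat) set" where
  "Fix V q f = {x \<in> configs V q. f x = x}"

definition gn :: "'a set \<Rightarrow> ('a \<Rightarrow> 'a \<Rightarrow> bool) \<Rightarrow> nat \<Rightarrow> real" where
  "gn V E q = Max {log (real q) (real (card (Fix V q f))) | f. is_map V q f \<and> IG_sub V E q f}"

definition entropy :: "'a set \<Rightarrow> ('a \<Rightarrow> 'a \<Rightarrow> bool) \<Rightarrow> real" where
  "entropy V E = Sup {gn V E q | q. q \<ge> 2}"

text \<open>Smaller graphs are taken on (arbitrary finite sets of) naturals,
  which covers every finite graph up to isomorphism.\<close>
definition entropy_minimal :: "'a set \<Rightarrow> ('a \<Rightarrow> 'a \<Rightarrow> bool) \<Rightarrow> bool" where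
  "entropy_minimal V E \<longleftrightarrow> simple_graph V E \<and>
     (\<forall>(V' :: nat set) E'. simple_graph V' E' \<and> card V' < card V \<longrightarrow>
        frac (entropy V' E') \<noteq> frac (entropy V E))"

definition nbhd :: "'a set \<Rightarrow> ('a \<Rightarrow> 'a \<Rightarrow> bool) \<Rightarrow> 'a \<Rightarrow> 'a set" where
  "nbhd V E v = {u \<in> V. E v u}"

definition cl :: "'a set \<Rightarrow> ('a \<Rightarrow> 'a \<Rightarrow> bool) \<Rightarrow> 'a set \<Rightarrow> 'a set" where
  "cl V E S = {v \<in> V - S. nbhd V E v \<subseteq> S}"

definition bip_matching :: "('a \<Rightarrow> 'a \<Rightarrow> bool) \<Rightarrow> 'a set \<Rightarrow> 'a set \<Rightarrow> ('a \<times> 'a) set \<Rightarrow> bool" where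
  "bip_matching E T S M \<longleftrightarrow>
     (\<forall>(t,s)\<in>M. t \<in> T \<and> s \<in> S \<and> E t s) \<and>
     (\<forall>(t,s)\<in>M. \<forall>(t',s')\<in>M. (t = t' \<or> s = s') \<longrightarrow> (t,s) = (t',s'))"

definition saturates :: "('a \<times> 'a) set \<Rightarrow> 'a set \<Rightarrow> bool" where
  "saturates M S \<longleftrightarrow> (\<forall>s\<in>S. \<exists>t. (t,s) \<in> M)"

end

theory Submission
  imports Defs
begin

text \<open>Let m match S into c(S) and let R = V - (S \<union> c(S)). For the upper bound, a fixed point
  is determined by its values on S and R: a vertex of c(S) only reads S, and no vertex of R reads
  c(S), so once the values on S are fixed the restriction to R is a fixed point of a network on
  G[R]. For the lower bound, combine any network on G[R] with the swaps x(s) := x(m s),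
  x(m s) := x(s) along the matching, which fix all q^|S| patterns on S. Hence the maximal number
  of fixed points on G is q^|S| times the one on G[R], so H(G) = |S| + H(G[R]), and G[R] has
  fewer vertices but the same fractional part of entropy.\<close>

lemma finite_configs: "finite V \<Longrightarrow> finite (configs V q)"
  and card_configs: "finite V \<Longrightarrow> card (configs V q) = q ^ card V"
proof -
  assume "finite V"
  then have "finite (configs V q) \<and> card (configs V q) = q ^ card V"
  proof (induction V rule: finite_induct)
    case empty
    have empty_configs: "configs {} q = {\<lambda>_. 0}" by (auto simp: configs_def)
    show ?case unfolding empty_configs by simp
  next
    case (insert v S)
    let ?extend = "\<lambda>(c, y). y(v := c)"
    have "bij_betw ?extend ({..<q} \<times> configs S q) (configs (insert v S) q)"
    proof (rule bij_betw_imageI)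
      show "inj_on ?extend ({..<q} \<times> configs S q)"
      proof (rule inj_onI, clarsimp)
        fix c y c' y'
        assume "y \<in> configs S q" "y' \<in> configs S q" and eq: "y(v := c) = y'(v := c')"
        then have "y v = y' v" using insert.hyps(2) by (simp add: configs_def)
        with eq show "c = c' \<and> y = y'" by (metis fun_upd_idem fun_upd_same fun_upd_upd)
      qed
      show "?extend ` ({..<q} \<times> configs S q) = configs (insert v S) q"
      proof (intro equalityI subsetI)
        fix x assume "x \<in> ?extend ` ({..<q} \<times> configs S q)"
        then show "x \<in> configs (insert v S) q" by (auto simp: configs_def)
      next
        fix x assume "x \<in> configs (insert v S) q"
        then have "(x v, x(v := 0)) \<in> {..<q} \<times> configs S q" by (auto simp: configs_def)
        then show "x \<in> ?extend ` ({..<q} \<times> configs S q)" by (rule rev_image_eqI) simp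
      qed
    qed
    then show ?case
      using insert by (auto simp: bij_betw_finite[symmetric] bij_betw_same_card[symmetric] card_cartesian_product)
  qed
  then show "finite (configs V q)" "card (configs V q) = q ^ card V" by simp_all
qed

lemma configs_mono: "S \<subseteq> V \<Longrightarrow> 0 < q \<Longrightarrow> configs S q \<subseteq> configs V q"
  by (auto simp: configs_def)

lemma finite_Fix: "finite V \<Longrightarrow> finite (Fix V q f)"
  by (rule finite_subset[OF _ finite_configs]) (auto simp: Fix_def)

lemma eq_if_differ_on_nondependencies:
  assumes "finite D" "\<forall>u\<in>D. \<not> depends V q f u v"
    and "a \<in> configs V q" "b \<in> configs V q" "{u. a u \<noteq> b u} \<subseteq> D"
  shows "f a v = f b v"
  using assms
proof (induction D arbitrary: a rule: finite_induct)
  case empty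
  then have "a = b" by auto
  then show ?case by simp
next
  case (insert u D)
  let ?a' = "a(u := b u)"
  have a'_configs: "?a' \<in> configs V q" using insert.prems(2,3) by (auto simp: configs_def)
  have "f a v = f ?a' v"
  proof -
    have "\<not> depends V q f u v" using insert.prems(1) by simp
    then have "\<forall>a\<in>configs V q. \<forall>b\<in>configs V q. (\<forall>w. w \<noteq> u \<longrightarrow> a w = b w) \<longrightarrow> f a v = f b v"
      unfolding depends_def by blast
    then have "(\<forall>w. w \<noteq> u \<longrightarrow> a w = ?a' w) \<longrightarrow> f a v = f ?a' v"
      using insert.prems(2) a'_configs by blast
    then show ?thesis by simp
  qed
  have "{w. ?a' w \<noteq> b w} \<subseteq> D" using insert.prems(4) by auto
  then have "f ?a' v = f b v"
    using insert.prems(1) by (intro insert.IH[OF _ a'_configs insert.prems(3)]) simp_all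
  with \<open>f a v = f ?a' v\<close> show ?case by simp
qed

lemma eq_if_agree_on_dependencies:
  assumes "finite V" "a \<in> configs V q" "b \<in> configs V q"
    and "\<forall>u\<in>V. depends V q f u v \<longrightarrow> a u = b u"
  shows "f a v = f b v"
proof -
  have "{u. a u \<noteq> b u} \<subseteq> {u \<in> V. a u \<noteq> b u}"
  proof
    fix u assume "u \<in> {u. a u \<noteq> b u}"
    moreover have "u \<notin> V \<Longrightarrow> a u = b u" using assms(2,3) by (simp add: configs_def)
    ultimately show "u \<in> {u \<in> V. a u \<noteq> b u}" by blast
  qed
  then show ?thesis
    using assms(1,4) by (intro eq_if_differ_on_nondependencies[OF _ _ assms(2,3)]) auto
qed

definition fix_counts :: "'a set \<Rightarrow> ('a \<Rightarrow> 'a \<Rightarrow> bool) \<Rightarrow> nat \<Rightarrow> nat set" where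
  "fix_counts V E q = {card (Fix V q f) | f. is_map V q f \<and> IG_sub V E q f}"

definition max_fix :: "'a set \<Rightarrow> ('a \<Rightarrow> 'a \<Rightarrow> bool) \<Rightarrow> nat \<Rightarrow> nat" where
  "max_fix V E q = Max (fix_counts V E q)"

lemma card_Fix_le_configs: "finite V \<Longrightarrow> card (Fix V q f) \<le> q ^ card V"
  unfolding card_configs[symmetric] by (rule card_mono[OF finite_configs]) (auto simp: Fix_def)

lemma finite_fix_counts: "finite V \<Longrightarrow> finite (fix_counts V E q)"
proof (rule finite_subset)
  assume "finite V"
  show "fix_counts V E q \<subseteq> {..q ^ card V}"
  proof
    fix n assume "n \<in> fix_counts V E q"
    then obtain f where "n = card (Fix V q f)" by (auto simp: fix_counts_def)
    then show "n \<in> {..q ^ card V}" using card_Fix_le_configs[OF \<open>finite V\<close>] by simp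
  qed
qed simp

text \<open>For q = 0 the constant map is vacuously a map, so no assumption on q is needed.\<close>
lemma fix_counts_nonempty: "fix_counts V E q \<noteq> {}"
proof -
  have "is_map V q (\<lambda>_ _. 0)" by (auto simp: is_map_def configs_def)
  moreover have "IG_sub V E q (\<lambda>_ _. 0)" by (simp add: IG_sub_def depends_def)
  ultimately show ?thesis unfolding fix_counts_def by blast
qed

lemma max_fix_attained:
  assumes "finite V"
  obtains f where "is_map V q f" "IG_sub V E q f" "card (Fix V q f) = max_fix V E q"
proof -
  have "max_fix V E q \<in> fix_counts V E q"
    unfolding max_fix_def using finite_fix_counts[OF assms] fix_counts_nonempty by (rule Max_in)
  then show ?thesis using that by (auto simp: fix_counts_def)
qed

lemma card_Fix_le_max_fix:
  assumes "finite V" "is_map V q f" "IG_sub V E q f"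
  shows "card (Fix V q f) \<le> max_fix V E q"
  unfolding max_fix_def using finite_fix_counts[OF assms(1)]
  by (rule Max_ge) (use assms(2,3) in \<open>auto simp: fix_counts_def\<close>)

lemma max_fix_le: "finite V \<Longrightarrow> max_fix V E q \<le> q ^ card V"
  by (metis max_fix_attained card_Fix_le_configs)

lemma max_fix_pos: "finite V \<Longrightarrow> 0 < q \<Longrightarrow> 0 < max_fix V E q"
proof -
  assume "finite V" "0 < q"
  have "Fix V q (\<lambda>_ _. 0) = {\<lambda>_. 0}" using \<open>0 < q\<close> by (auto simp: Fix_def configs_def)
  moreover have "is_map V q (\<lambda>_ _. 0)" "IG_sub V E q (\<lambda>_ _. 0)"
    using \<open>0 < q\<close> by (auto simp: is_map_def configs_def IG_sub_def depends_def)
  ultimately show ?thesis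
    using card_Fix_le_max_fix[OF \<open>finite V\<close>, of q "\<lambda>_ _. 0" E] by simp
qed

lemma gn_eq_log_max_fix:
  assumes "finite V" "2 \<le> q"
  shows "gn V E q = log q (max_fix V E q)"
proof -
  have mono_log: "mono (\<lambda>n::nat. log q n)"
  proof
    fix m n :: nat assume "m \<le> n"
    show "log q m \<le> log q n"
    proof (cases "m = 0")
      case True
      have "0 \<le> ln (real n)" by (cases "n = 0") simp_all
      with True assms(2) show ?thesis by (simp add: log_def)
    next
      case False
      with \<open>m \<le> n\<close> assms(2) show ?thesis by simp
    qed
  qed
  have "{log q (card (Fix V q f)) | f. is_map V q f \<and> IG_sub V E q f}
      = (\<lambda>n. log q n) ` fix_counts V E q"
    by (auto simp: fix_counts_def)
  then show ?thesis
    unfolding gn_def max_fix_def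
    using mono_Max_commute[OF mono_log finite_fix_counts[OF assms(1)] fix_counts_nonempty] by simp
qed

lemma gn_le_card:
  assumes "finite V" "2 \<le> q"
  shows "gn V E q \<le> card V"
proof -
  have "real (max_fix V E q) \<le> real q ^ card V"
    using max_fix_le[OF assms(1)] by (metis of_nat_le_iff of_nat_power)
  then have "log q (max_fix V E q) \<le> log q (real q ^ card V)"
    using max_fix_pos[OF assms(1)] assms(2) by (subst log_le_cancel_iff) auto
  then show ?thesis using assms by (simp add: gn_eq_log_max_fix log_nat_power)
qed

lemma entropy_eq_shift:
  assumes "finite V'" and shift: "\<And>q. 2 \<le> q \<Longrightarrow> gn V E q = k + gn V' E' q"
  shows "entropy V E = k + entropy V' E'"
proof -
  have bdd: "bdd_above (gn V' E' ` {q. 2 \<le> q})"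
    using gn_le_card[OF assms(1)] by (intro bdd_aboveI2) auto
  have "{gn V E q | q. 2 \<le> q} = (\<lambda>q. k + gn V' E' q) ` {q. 2 \<le> q}"
    using shift by force
  then have "entropy V E = (SUP q\<in>{q. 2 \<le> q}. k + gn V' E' q)"
    unfolding entropy_def by simp
  also have "\<dots> = k + (SUP q\<in>{q. 2 \<le> q}. gn V' E' q)"
    using bdd by (rule Sup_add_eq) auto
  also have "\<dots> = k + entropy V' E'"
    unfolding entropy_def by (simp add: setcompr_eq_image)
  finally show ?thesis .
qed

definition relabel_config :: "('a \<Rightarrow> 'b) \<Rightarrow> 'a set \<Rightarrow> ('b \<Rightarrow> nat) \<Rightarrow> 'a \<Rightarrow> nat" where
  "relabel_config h A y = (\<lambda>a. if a \<in> A then y (h a) else 0)"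

lemma relabel_config_in_configs:
  "h ` A \<subseteq> B \<Longrightarrow> y \<in> configs B q \<Longrightarrow> relabel_config h A y \<in> configs A q"
  by (auto simp: relabel_config_def configs_def)

lemma relabel_config_inverse:
  "\<forall>a\<in>A. h a \<in> B \<and> h' (h a) = a \<Longrightarrow> x \<in> configs A q
    \<Longrightarrow> relabel_config h A (relabel_config h' B x) = x"
  by (auto simp: relabel_config_def configs_def fun_eq_iff)

lemma IG_sub_relabel:
  assumes bij: "bij_betw h A B" and edges: "\<forall>u\<in>A. \<forall>v\<in>A. EA u v \<longrightarrow> EB (h u) (h v)"
    and "IG_sub A EA q f"
  shows "IG_sub B EB q (\<lambda>y. relabel_config (inv_into A h) B (f (relabel_config h A y)))"
    (is "IG_sub B EB q ?g")
  unfolding IG_sub_def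
proof (intro ballI impI)
  let ?h' = "inv_into A h"
  have h'_in: "?h' b \<in> A" and h_h': "h (?h' b) = b" if "b \<in> B" for b
    using bij that by (auto simp: bij_betw_def inv_into_into f_inv_into_f)
  fix u v assume uv: "u \<in> B" "v \<in> B" "depends B q ?g u v"
  then obtain a b where ab: "a \<in> configs B q" "b \<in> configs B q"
    "\<forall>w. w \<noteq> u \<longrightarrow> a w = b w" "?g a v \<noteq> ?g b v"
    by (auto simp: depends_def)
  have "f (relabel_config h A a) (?h' v) \<noteq> f (relabel_config h A b) (?h' v)"
    using ab(4) uv by (simp add: relabel_config_def)
  moreover have "\<forall>w. w \<noteq> ?h' u \<longrightarrow> relabel_config h A a w = relabel_config h A b w"
  proof (intro allI impI)
    fix w assume "w \<noteq> ?h' u"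
    then have "w \<in> A \<Longrightarrow> h w \<noteq> u" using bij by (auto simp: bij_betw_def)
    then show "relabel_config h A a w = relabel_config h A b w"
      using ab(3) by (simp add: relabel_config_def)
  qed
  moreover have "h ` A \<subseteq> B" using bij by (simp add: bij_betw_def)
  then have "relabel_config h A a \<in> configs A q" "relabel_config h A b \<in> configs A q"
    using ab(1,2) by (simp_all add: relabel_config_in_configs)
  ultimately have "depends A q f (?h' u) (?h' v)"
    unfolding depends_def by blast
  then have "EA (?h' u) (?h' v)" using assms(3) h'_in uv by (auto simp: IG_sub_def)
  then show "EB u v" using edges h'_in h_h' uv by metis
qed

lemma max_fix_le_relabel:
  fixes h :: "'a \<Rightarrow> 'b"
  assumes "finite A" "finite B" and bij: "bij_betw h A B"
    and edges: "\<forall>u\<in>A. \<forall>v\<in>A. EA u v \<longrightarrow> EB (h u) (h v)"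
  shows "max_fix A EA q \<le> max_fix B EB q"
proof -
  obtain f where f: "is_map A q f" "IG_sub A EA q f" "card (Fix A q f) = max_fix A EA q"
    using max_fix_attained[OF assms(1)] .
  let ?h' = "inv_into A h"
  let ?push = "relabel_config ?h' B" and ?pull = "relabel_config h A"
  let ?g = "\<lambda>y. ?push (f (?pull y))"
  have "h ` A \<subseteq> B" "?h' ` B \<subseteq> A" using bij by (auto simp: bij_betw_def inv_into_into)
  have inverse: "\<forall>a\<in>A. h a \<in> B \<and> ?h' (h a) = a" "\<forall>b\<in>B. ?h' b \<in> A \<and> h (?h' b) = b"
    using bij by (auto simp: bij_betw_def inv_into_into f_inv_into_f)
  have pull_push: "?pull (?push x) = x" if "x \<in> configs A q" for x
    using relabel_config_inverse[OF inverse(1) that] .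
  have push_pull: "?push (?pull y) = y" if "y \<in> configs B q" for y
    using relabel_config_inverse[OF inverse(2) that] .
  have pull: "?pull y \<in> configs A q" if "y \<in> configs B q" for y
    using relabel_config_in_configs[OF \<open>h ` A \<subseteq> B\<close> that] .
  have push: "?push x \<in> configs B q" if "x \<in> configs A q" for x
    using relabel_config_in_configs[OF \<open>?h' ` B \<subseteq> A\<close> that] .
  have "is_map B q ?g" using f(1) pull push unfolding is_map_def by blast
  moreover have "IG_sub B EB q ?g" using IG_sub_relabel[OF bij edges f(2)] .
  moreover have "Fix B q ?g = ?push ` Fix A q f"
  proof (intro equalityI subsetI)
    fix y assume "y \<in> Fix B q ?g"
    then have y: "y \<in> configs B q" "?push (f (?pull y)) = y" by (auto simp: Fix_def)
    have "f (?pull y) \<in> configs A q" using f(1) pull[OF y(1)] by (simp add: is_map_def)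
    then have "f (?pull y) = ?pull y" using pull_push y(2) by metis
    then have "?pull y \<in> Fix A q f" using pull y(1) by (simp add: Fix_def)
    then show "y \<in> ?push ` Fix A q f" using push_pull y(1) by (metis image_eqI)
  next
    fix y assume "y \<in> ?push ` Fix A q f"
    then show "y \<in> Fix B q ?g" using push pull_push by (auto simp: Fix_def)
  qed
  moreover have "inj_on ?push (Fix A q f)"
  proof (rule inj_onI)
    fix x x' assume "x \<in> Fix A q f" "x' \<in> Fix A q f" "?push x = ?push x'"
    then have "?pull (?push x) = ?pull (?push x')" "x \<in> configs A q" "x' \<in> configs A q"
      by (simp_all add: Fix_def)
    then show "x = x'" using pull_push by simp
  qed
  ultimately show ?thesis
    using f(3) card_Fix_le_max_fix[OF assms(2)] by (metis card_image)
qed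

lemma max_fix_relabel:
  fixes h :: "'a \<Rightarrow> 'b"
  assumes "finite A" and bij: "bij_betw h A B"
    and edges: "\<forall>u\<in>A. \<forall>v\<in>A. EB (h u) (h v) \<longleftrightarrow> EA u v"
  shows "max_fix B EB q = max_fix A EA q"
proof (rule antisym)
  have "finite B" using assms(1) bij bij_betw_finite by blast
  have "bij_betw (inv_into A h) B A" using bij by (rule bij_betw_inv_into)
  moreover have "\<forall>u\<in>B. \<forall>v\<in>B. EB u v \<longrightarrow> EA (inv_into A h u) (inv_into A h v)"
    using bij edges by (auto simp: bij_betw_def inv_into_into f_inv_into_f)
  ultimately show "max_fix B EB q \<le> max_fix A EA q"
    using max_fix_le_relabel[OF \<open>finite B\<close> assms(1)] by blast
  show "max_fix A EA q \<le> max_fix B EB q"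
    using max_fix_le_relabel[OF assms(1) \<open>finite B\<close> bij] edges by blast
qed

lemma obtain_nat_relabelling:
  assumes "finite R" "\<forall>u v. E u v \<longrightarrow> E v u" "\<forall>u. \<not> E u u"
  obtains V' :: "nat set" and E' where "simple_graph V' E'" "card V' = card R"
    "entropy V' E' = entropy R E"
proof -
  obtain h where h: "bij_betw h {0..<card R} R"
    using ex_bij_betw_nat_finite[OF assms(1)] by blast
  define E' where "E' i j \<longleftrightarrow> i \<in> {0..<card R} \<and> j \<in> {0..<card R} \<and> E (h i) (h j)" for i j
  have "simple_graph {0..<card R} E'" using assms(2,3) by (auto simp: simple_graph_def E'_def)
  moreover have "max_fix {0..<card R} E' q = max_fix R E q" for q
    by (rule max_fix_relabel[OF _ h, symmetric]) (auto simp: E'_def)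
  then have "entropy {0..<card R} E' = 0 + entropy R E"
    using assms(1) by (intro entropy_eq_shift) (simp_all add: gn_eq_log_max_fix)
  ultimately show ?thesis using that by simp
qed

definition restrict_config :: "'a set \<Rightarrow> ('a \<Rightarrow> nat) \<Rightarrow> 'a \<Rightarrow> nat" where
  "restrict_config A x = (\<lambda>v. if v \<in> A then x v else 0)"

lemma restrict_config_in_configs:
  "A \<subseteq> V \<Longrightarrow> x \<in> configs V q \<Longrightarrow> restrict_config A x \<in> configs A q"
  by (auto simp: restrict_config_def configs_def)

lemma restrict_config_eq_iff:
  "restrict_config A x = restrict_config A y \<longleftrightarrow> (\<forall>v\<in>A. x v = y v)"
proof
  assume eq: "restrict_config A x = restrict_config A y"
  show "\<forall>v\<in>A. x v = y v"
  proof
    fix v assume "v \<in> A"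
    then show "x v = y v" using fun_cong[OF eq, of v] by (simp add: restrict_config_def)
  qed
qed (auto simp: restrict_config_def)

lemma override_on_in_configs:
  "R \<subseteq> V \<Longrightarrow> a \<in> configs V q \<Longrightarrow> y \<in> configs R q \<Longrightarrow> override_on a y R \<in> configs V q"
  by (auto simp: override_on_def configs_def)

definition section_map ::
  "'a set \<Rightarrow> (('a \<Rightarrow> nat) \<Rightarrow> ('a \<Rightarrow> nat)) \<Rightarrow> ('a \<Rightarrow> nat) \<Rightarrow> ('a \<Rightarrow> nat) \<Rightarrow> ('a \<Rightarrow> nat)" where
  "section_map R f a y = restrict_config R (f (override_on a y R))"

lemma is_map_section_map:
  assumes "is_map V q f" "R \<subseteq> V" "a \<in> configs V q"
  shows "is_map R q (section_map R f a)"
  using assms override_on_in_configs restrict_config_in_configs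
  unfolding is_map_def section_map_def by blast

lemma IG_sub_section_map:
  assumes "IG_sub V E q f" "R \<subseteq> V" "a \<in> configs V q"
  shows "IG_sub R E q (section_map R f a)"
  unfolding IG_sub_def
proof (intro ballI impI)
  fix u v assume uv: "u \<in> R" "v \<in> R" and "depends R q (section_map R f a) u v"
  then obtain y y' where y: "y \<in> configs R q" "y' \<in> configs R q"
    "\<forall>w. w \<noteq> u \<longrightarrow> y w = y' w" "section_map R f a y v \<noteq> section_map R f a y' v"
    by (auto simp: depends_def)
  have "\<forall>w. w \<noteq> u \<longrightarrow> override_on a y R w = override_on a y' R w"
    using y(3) by (simp add: override_on_def)
  moreover have "f (override_on a y R) v \<noteq> f (override_on a y' R) v"
    using y(4) uv(2) by (simp add: section_map_def restrict_config_def)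
  ultimately have "depends V q f u v"
    unfolding depends_def using override_on_in_configs[OF assms(2,3)] y(1,2) by blast
  then show "E u v" using assms(1,2) uv by (auto simp: IG_sub_def)
qed

lemma restrict_Fix_in_Fix_section_map:
  assumes "finite V" "IG_sub V E q f" "R \<subseteq> V" "x \<in> Fix V q f" "a \<in> configs V q"
    and deviation: "\<forall>u\<in>V - R. a u \<noteq> x u \<longrightarrow> (\<forall>v\<in>R. \<not> E u v)"
  shows "restrict_config R x \<in> Fix R q (section_map R f a)"
proof -
  have x: "x \<in> configs V q" "f x = x" using assms(4) by (auto simp: Fix_def)
  have xR: "restrict_config R x \<in> configs R q"
    using restrict_config_in_configs[OF assms(3) x(1)] .
  have "f (override_on a (restrict_config R x) R) v = f x v" if "v \<in> R" for v
  proof (rule eq_if_agree_on_dependencies[OF assms(1) override_on_in_configs[OF assms(3,5) xR] x(1)])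
    show "\<forall>u\<in>V. depends V q f u v \<longrightarrow> override_on a (restrict_config R x) R u = x u"
      using deviation assms(2) that subsetD[OF assms(3) that]
      by (auto simp: IG_sub_def override_on_def restrict_config_def)
  qed
  then have "section_map R f a (restrict_config R x) = restrict_config R x"
    using x(2) by (auto simp: section_map_def restrict_config_def)
  then show ?thesis using xR by (simp add: Fix_def)
qed

lemma Fix_eq_on_cl:
  assumes "finite V" "IG_sub V E q f" "\<forall>u v. E u v \<longrightarrow> E v u"
    and "x \<in> Fix V q f" "x' \<in> Fix V q f" "\<forall>s\<in>S. x s = x' s" "v \<in> cl V E S"
  shows "x v = x' v"
proof -
  have "f x v = f x' v"
  proof (rule eq_if_agree_on_dependencies[OF assms(1), of x q x' f v])
    show "\<forall>u\<in>V. depends V q f u v \<longrightarrow> x u = x' u"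
      using assms(2,3,6,7) by (auto simp: IG_sub_def cl_def nbhd_def)
  qed (use assms(4,5) in \<open>auto simp: Fix_def\<close>)
  then show ?thesis using assms(4,5) by (simp add: Fix_def)
qed

definition rest :: "'a set \<Rightarrow> ('a \<Rightarrow> 'a \<Rightarrow> bool) \<Rightarrow> 'a set \<Rightarrow> 'a set" where
  "rest V E S = V - S - cl V E S"

lemma Fix_eq_if_eq_on_S_and_rest:
  assumes "finite V" "IG_sub V E q f" "\<forall>u v. E u v \<longrightarrow> E v u"
    and x: "x \<in> Fix V q f" "x' \<in> Fix V q f"
    and S: "\<forall>s\<in>S. x s = x' s" and R: "\<forall>v\<in>rest V E S. x v = x' v"
  shows "x = x'"
proof
  fix v
  show "x v = x' v"
  proof (cases "v \<in> V")
    case True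
    then consider "v \<in> S" | "v \<in> rest V E S" | "v \<in> cl V E S" by (auto simp: rest_def)
    then show ?thesis using S R Fix_eq_on_cl[OF assms(1-3) x S] by cases auto
  next
    case False
    then show ?thesis using x by (auto simp: Fix_def configs_def)
  qed
qed

lemma max_fix_le_rest:
  assumes "finite V" "S \<subseteq> V" "0 < q" and sym: "\<forall>u v. E u v \<longrightarrow> E v u"
  shows "max_fix V E q \<le> q ^ card S * max_fix (rest V E S) E q"
proof -
  let ?R = "rest V E S"
  have "?R \<subseteq> V" "finite ?R" using assms(1) by (auto simp: rest_def)
  have "finite S" using assms(1,2) finite_subset by blast
  obtain f where f: "is_map V q f" "IG_sub V E q f" "card (Fix V q f) = max_fix V E q"
    using max_fix_attained[OF assms(1)] .
  let ?pair = "\<lambda>x. (restrict_config S x, restrict_config ?R x)"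
  let ?Sigma = "SIGMA a:configs S q. Fix ?R q (section_map ?R f a)"
  have "?pair x \<in> ?Sigma" if x: "x \<in> Fix V q f" for x
  proof -
    from x have a: "restrict_config S x \<in> configs S q"
      using restrict_config_in_configs[OF assms(2)] by (auto simp: Fix_def)
    moreover have "restrict_config ?R x \<in> Fix ?R q (section_map ?R f (restrict_config S x))"
    proof (rule restrict_Fix_in_Fix_section_map[OF assms(1) f(2) \<open>?R \<subseteq> V\<close> x])
      show "restrict_config S x \<in> configs V q" using a configs_mono[OF assms(2,3)] by blast
      show "\<forall>u\<in>V - ?R. restrict_config S x u \<noteq> x u \<longrightarrow> (\<forall>v\<in>?R. \<not> E u v)"
        by (auto simp: restrict_config_def rest_def cl_def nbhd_def)
    qed
    ultimately show ?thesis by simp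
  qed
  then have image_sub: "?pair ` Fix V q f \<subseteq> ?Sigma" by (rule image_subsetI)
  have inj: "inj_on ?pair (Fix V q f)"
  proof (rule inj_onI)
    fix x x' assume x: "x \<in> Fix V q f" "x' \<in> Fix V q f" and "?pair x = ?pair x'"
    then have "\<forall>s\<in>S. x s = x' s" "\<forall>v\<in>?R. x v = x' v" by (simp_all add: restrict_config_eq_iff)
    then show "x = x'" by (rule Fix_eq_if_eq_on_S_and_rest[OF assms(1) f(2) sym x])
  qed
  have "finite ?Sigma"
    using finite_configs[OF \<open>finite S\<close>] finite_Fix[OF \<open>finite ?R\<close>] by (rule finite_SigmaI)
  have "card (Fix V q f) = card (?pair ` Fix V q f)" using inj by (simp add: card_image)
  also have "\<dots> \<le> card ?Sigma" using \<open>finite ?Sigma\<close> image_sub by (rule card_mono)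
  also have "\<dots> = (\<Sum>a\<in>configs S q. card (Fix ?R q (section_map ?R f a)))"
    by (rule card_SigmaI) (simp_all add: finite_configs[OF \<open>finite S\<close>] finite_Fix[OF \<open>finite ?R\<close>])
  also have "\<dots> \<le> (\<Sum>a\<in>configs S q. max_fix ?R E q)"
  proof (rule sum_mono)
    fix a assume "a \<in> configs S q"
    then have "a \<in> configs V q" using configs_mono[OF assms(2,3)] by blast
    then show "card (Fix ?R q (section_map ?R f a)) \<le> max_fix ?R E q"
      by (intro card_Fix_le_max_fix[OF \<open>finite ?R\<close>] is_map_section_map[OF f(1) \<open>?R \<subseteq> V\<close>]
          IG_sub_section_map[OF f(2) \<open>?R \<subseteq> V\<close>])
  qed
  also have "\<dots> = q ^ card S * max_fix ?R E q"
    by (simp add: card_configs[OF \<open>finite S\<close>])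
  finally show ?thesis using f(3) by simp
qed

definition matching_extension ::
  "'a set \<Rightarrow> ('a \<Rightarrow> 'a) \<Rightarrow> 'a set \<Rightarrow> (('a \<Rightarrow> nat) \<Rightarrow> ('a \<Rightarrow> nat)) \<Rightarrow> ('a \<Rightarrow> nat) \<Rightarrow> ('a \<Rightarrow> nat)"
where
  "matching_extension S m R g x = (\<lambda>v.
     if v \<in> S then x (m v)
     else if v \<in> m ` S then x (inv_into S m v)
     else if v \<in> R then g (restrict_config R x) v
     else 0)"

lemma is_map_matching_extension:
  assumes "S \<subseteq> V" "m ` S \<subseteq> V" "R \<subseteq> V" "is_map R q g"
  shows "is_map V q (matching_extension S m R g)"
  unfolding is_map_def
proof
  fix x assume x: "x \<in> configs V q"
  have g: "g (restrict_config R x) \<in> configs R q"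
    using assms(4) restrict_config_in_configs[OF assms(3) x] by (auto simp: is_map_def)
  have "matching_extension S m R g x v < q" if "v \<in> V" for v
    using x g that assms(1,2) inv_into_into[of _ m S]
    by (auto simp: matching_extension_def configs_def)
  moreover have "matching_extension S m R g x v = 0" if "v \<notin> V" for v
    using that assms(1-3) by (auto simp: matching_extension_def)
  ultimately show "matching_extension S m R g x \<in> configs V q" by (simp add: configs_def)
qed

lemma IG_sub_matching_extension:
  assumes "R \<subseteq> V" "IG_sub R E q g"
    and edges: "\<forall>s\<in>S. E (m s) s" and sym: "\<forall>u v. E u v \<longrightarrow> E v u"
  shows "IG_sub V E q (matching_extension S m R g)"
  unfolding IG_sub_def
proof (intro ballI impI)
  fix u v assume uv: "u \<in> V" "v \<in> V" and "depends V q (matching_extension S m R g) u v"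
  then obtain a b where ab: "a \<in> configs V q" "b \<in> configs V q"
    "\<forall>w. w \<noteq> u \<longrightarrow> a w = b w" "matching_extension S m R g a v \<noteq> matching_extension S m R g b v"
    by (auto simp: depends_def)
  consider "v \<in> S" | "v \<notin> S" "v \<in> m ` S" | "v \<notin> S" "v \<notin> m ` S" "v \<in> R"
    | "v \<notin> S" "v \<notin> m ` S" "v \<notin> R" by blast
  then show "E u v"
  proof cases
    case 1
    then have "a (m v) \<noteq> b (m v)" using ab(4) by (simp add: matching_extension_def)
    then have "u = m v" using ab(3) by auto
    then show ?thesis using edges 1 by simp
  next
    case 2
    then have "a (inv_into S m v) \<noteq> b (inv_into S m v)" using ab(4) by (simp add: matching_extension_def)
    then have "u = inv_into S m v" using ab(3) by auto
    moreover have "E v (inv_into S m v)"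
      using edges 2(2) by (metis f_inv_into_f inv_into_into)
    ultimately show ?thesis using sym by blast
  next
    case 3
    then have ne: "g (restrict_config R a) v \<noteq> g (restrict_config R b) v"
      using ab(4) by (simp add: matching_extension_def)
    have "u \<notin> R \<Longrightarrow> restrict_config R a = restrict_config R b"
      using ab(3) by (auto simp: restrict_config_def fun_eq_iff)
    then have "u \<in> R" using ne by metis
    moreover have "\<forall>w. w \<noteq> u \<longrightarrow> restrict_config R a w = restrict_config R b w"
      using ab(3) by (simp add: restrict_config_def)
    then have "depends R q g u v"
      unfolding depends_def
      using restrict_config_in_configs[OF assms(1) ab(1)] restrict_config_in_configs[OF assms(1) ab(2)] ne
      by blast
    ultimately show ?thesis using assms(2) 3(3) by (simp add: IG_sub_def)
  next
    case 4
    then show ?thesis using ab(4) by (simp add: matching_extension_def)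
  qed
qed

lemma card_Fix_matching_extension:
  assumes "finite V" "S \<subseteq> V" "m ` S \<subseteq> V - S" "R \<subseteq> V - S - m ` S" "inj_on m S" "0 < q"
  shows "q ^ card S * card (Fix R q g) \<le> card (Fix V q (matching_extension S m R g))"
proof -
  let ?f = "matching_extension S m R g"
  define emb where "emb = (\<lambda>(a, y) v.
    if v \<in> S then a v else if v \<in> m ` S then a (inv_into S m v) else if v \<in> R then y v else 0::nat)"
  have "emb (a, y) \<in> Fix V q ?f" if a: "a \<in> configs S q" and y: "y \<in> Fix R q g" for a y
  proof -
    have y': "y \<in> configs R q" "g y = y" using y by (auto simp: Fix_def)
    have "emb (a, y) \<in> configs V q"
      using a y'(1) assms(2-4,6) inv_into_into[of _ m S]
      by (auto simp: emb_def configs_def)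
    moreover have "?f (emb (a, y)) = emb (a, y)"
    proof
      fix v
      have "m v \<notin> S" "inv_into S m (m v) = v" if "v \<in> S"
        using that assms(3,5) by auto
      moreover have "inv_into S m v \<in> S" if "v \<in> m ` S"
        using that by (auto intro: inv_into_into)
      moreover have "restrict_config R (emb (a, y)) = y"
        using y'(1) assms(4) by (auto simp: restrict_config_def emb_def configs_def fun_eq_iff)
      ultimately show "?f (emb (a, y)) v = emb (a, y) v"
        using y'(2) by (simp add: matching_extension_def) (simp add: emb_def)
    qed
    ultimately show ?thesis by (simp add: Fix_def)
  qed
  then have "emb ` (configs S q \<times> Fix R q g) \<subseteq> Fix V q ?f" by auto
  moreover have "inj_on emb (configs S q \<times> Fix R q g)"
  proof (rule inj_onI, clarify)
    fix a y a' y'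
    assume a: "a \<in> configs S q" "a' \<in> configs S q" and y: "y \<in> Fix R q g" "y' \<in> Fix R q g"
      and eq: "emb (a, y) = emb (a', y')"
    have "a v = a' v" for v
      using fun_cong[OF eq, of v] a by (cases "v \<in> S") (auto simp: emb_def configs_def)
    moreover have "y v = y' v" for v
      using fun_cong[OF eq, of v] y assms(4) by (cases "v \<in> R") (auto simp: emb_def Fix_def configs_def)
    ultimately show "a = a' \<and> y = y'" by auto
  qed
  ultimately have "card (configs S q \<times> Fix R q g) \<le> card (Fix V q ?f)"
    using finite_Fix[OF assms(1)] by (metis card_image card_mono)
  moreover have "finite S" using assms(1,2) finite_subset by blast
  ultimately show ?thesis by (simp add: card_cartesian_product card_configs)
qed

lemma max_fix_ge_rest:
  assumes "finite V" "S \<subseteq> V" "0 < q" and sym: "\<forall>u v. E u v \<longrightarrow> E v u"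
    and "inj_on m S" and matched: "\<forall>s\<in>S. m s \<in> cl V E S \<and> E (m s) s"
  shows "q ^ card S * max_fix (rest V E S) E q \<le> max_fix V E q"
proof -
  let ?R = "rest V E S"
  have "m ` S \<subseteq> V - S" "?R \<subseteq> V - S - m ` S" "?R \<subseteq> V" "finite ?R"
    using matched assms(1) by (auto simp: rest_def cl_def)
  obtain g where g: "is_map ?R q g" "IG_sub ?R E q g" "card (Fix ?R q g) = max_fix ?R E q"
    using max_fix_attained[OF \<open>finite ?R\<close>] .
  have "is_map V q (matching_extension S m ?R g)"
    using is_map_matching_extension[OF assms(2) _ \<open>?R \<subseteq> V\<close> g(1)] \<open>m ` S \<subseteq> V - S\<close> by blast
  moreover have "IG_sub V E q (matching_extension S m ?R g)"
    using IG_sub_matching_extension[OF \<open>?R \<subseteq> V\<close> g(2) _ sym] matched by blast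
  ultimately have "card (Fix V q (matching_extension S m ?R g)) \<le> max_fix V E q"
    by (rule card_Fix_le_max_fix[OF assms(1)])
  moreover have "q ^ card S * card (Fix ?R q g) \<le> card (Fix V q (matching_extension S m ?R g))"
    using card_Fix_matching_extension[OF assms(1,2) \<open>m ` S \<subseteq> V - S\<close> \<open>?R \<subseteq> V - S - m ` S\<close>
        \<open>inj_on m S\<close> \<open>0 < q\<close>] .
  ultimately show ?thesis using g(3) by simp
qed

lemma max_fix_eq_rest:
  assumes "finite V" "S \<subseteq> V" "0 < q" "\<forall>u v. E u v \<longrightarrow> E v u"
    and "inj_on m S" "\<forall>s\<in>S. m s \<in> cl V E S \<and> E (m s) s"
  shows "max_fix V E q = q ^ card S * max_fix (rest V E S) E q"
  using max_fix_le_rest[OF assms(1-4)] max_fix_ge_rest[OF assms] by (rule antisym)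

lemma gn_eq_rest:
  assumes "finite V" "S \<subseteq> V" "2 \<le> q" "\<forall>u v. E u v \<longrightarrow> E v u"
    and "inj_on m S" "\<forall>s\<in>S. m s \<in> cl V E S \<and> E (m s) s"
  shows "gn V E q = card S + gn (rest V E S) E q"
proof -
  have "finite (rest V E S)" using assms(1) by (simp add: rest_def)
  have "0 < q" using assms(3) by simp
  have "gn V E q = log q (real q ^ card S * max_fix (rest V E S) E q)"
    using gn_eq_log_max_fix[OF assms(1,3)] max_fix_eq_rest[OF assms(1,2) \<open>0 < q\<close> assms(4-6)] by simp
  also have "\<dots> = card S + log q (max_fix (rest V E S) E q)"
    using assms(3) max_fix_pos[OF \<open>finite (rest V E S)\<close> \<open>0 < q\<close>] by (simp add: log_mult log_nat_power)
  also have "\<dots> = card S + gn (rest V E S) E q"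
    using gn_eq_log_max_fix[OF \<open>finite (rest V E S)\<close> assms(3)] by simp
  finally show ?thesis .
qed

lemma entropy_eq_rest:
  assumes "finite V" "S \<subseteq> V" "\<forall>u v. E u v \<longrightarrow> E v u"
    and "inj_on m S" "\<forall>s\<in>S. m s \<in> cl V E S \<and> E (m s) s"
  shows "entropy V E = card S + entropy (rest V E S) E"
  using assms(1) gn_eq_rest[OF assms(1,2) _ assms(3-5)]
  by (intro entropy_eq_shift) (simp_all add: rest_def)

lemma saturating_matching_obtains_injection:
  assumes "bip_matching E T S M" "saturates M S"
  obtains m where "inj_on m S" "\<forall>s\<in>S. m s \<in> T \<and> E (m s) s"
proof
  have edges: "\<forall>(t, s)\<in>M. t \<in> T \<and> s \<in> S \<and> E t s"
    and disjoint: "\<forall>(t, s)\<in>M. \<forall>(t', s')\<in>M. t = t' \<or> s = s' \<longrightarrow> (t, s) = (t', s')"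
    using assms(1) by (simp_all add: bip_matching_def)
  define m where "m s = (SOME t. (t, s) \<in> M)" for s
  have in_M: "(m s, s) \<in> M" if "s \<in> S" for s
  proof -
    have "\<exists>t. (t, s) \<in> M" using assms(2) that by (simp add: saturates_def)
    then show ?thesis unfolding m_def by (rule someI_ex)
  qed
  show "\<forall>s\<in>S. m s \<in> T \<and> E (m s) s"
  proof
    fix s assume "s \<in> S"
    from bspec[OF edges in_M[OF this]] show "m s \<in> T \<and> E (m s) s" by simp
  qed
  show "inj_on m S"
  proof (rule inj_onI)
    fix s s' assume "s \<in> S" "s' \<in> S" "m s = m s'"
    have "\<forall>(t', s'')\<in>M. m s = t' \<or> s = s'' \<longrightarrow> (m s, s) = (t', s'')"
      using bspec[OF disjoint in_M[OF \<open>s \<in> S\<close>]] by simp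
    from bspec[OF this in_M[OF \<open>s' \<in> S\<close>]] show "s = s'" using \<open>m s = m s'\<close> by simp
  qed
qed

theorem lemma3:
  fixes V :: "'a set" and E :: "'a \<Rightarrow> 'a \<Rightarrow> bool"
  assumes "entropy_minimal V E"
  shows "\<forall>S. S \<subseteq> V \<and> S \<noteq> {} \<longrightarrow>
           \<not> (\<exists>M. bip_matching E (cl V E S) S M \<and> saturates M S)"
proof (intro allI impI notI, elim conjE exE)
  fix S M assume S: "S \<subseteq> V" "S \<noteq> {}" and M: "bip_matching E (cl V E S) S M" "saturates M S"
  have "simple_graph V E" using assms by (simp add: entropy_minimal_def)
  then have "finite V" and sym: "\<forall>u v. E u v \<longrightarrow> E v u" and irrefl: "\<forall>u. \<not> E u u"
    by (simp_all add: simple_graph_def)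
  obtain m where m: "inj_on m S" "\<forall>s\<in>S. m s \<in> cl V E S \<and> E (m s) s"
    using saturating_matching_obtains_injection[OF M] .
  have "finite (rest V E S)" using \<open>finite V\<close> by (simp add: rest_def)
  obtain V' :: "nat set" and E' where G': "simple_graph V' E'" "card V' = card (rest V E S)"
    and "entropy V' E' = entropy (rest V E S) E"
    by (rule obtain_nat_relabelling[OF \<open>finite (rest V E S)\<close> sym irrefl])
  then have entropy_V: "entropy V E = card S + entropy V' E'"
    using entropy_eq_rest[OF \<open>finite V\<close> S(1) sym m] by simp
  have "card (rest V E S) < card V"
    using S \<open>finite V\<close> by (intro psubset_card_mono) (auto simp: rest_def)
  have "frac (entropy V' E') = frac (entropy V E)" by (simp add: entropy_V frac_add_int_left)
  moreover have "frac (entropy V' E') \<noteq> frac (entropy V E)"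
    using assms G' \<open>card (rest V E S) < card V\<close> by (simp add: entropy_minimal_def)
  ultimately show False by contradiction
qed

end
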